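(* For every positive integer $n$ and every function $\sigma\colon E(K_{4n})\to\{-1,1\}$ with $\left|\sigma\left(E(K_{4n})\right)\right|<n^2+11n+2$, there is a perfect matching $M$ in $K_{4n}$ with $|\sigma(M)|\leq 2$.
   Context: $K_{4n}$ denotes the complete graph on $4n$ vertices and $E(K_{4n})$ its edge set. For a set $F$ of edges, $\sigma(F)=\sum_{e\in F}\sigma(e)$. *)

theory Defs
  imports Main
begin

definition edges_K :: "nat \<Rightarrow> nat set set" where
  "edges_K m = {e. \<exists>u v. u < m \<and> v < m \<and> u \<noteq> v \<and> e = {u, v}}"

definition perfect_matching :: "nat \<Rightarrow> nat set set \<Rightarrow> bool" where
  "perfect_matching m M \<longleftrightarrow> M \<subseteq> edges_K m \<and> (\<forall>v<m. \<exists>!e. e \<in> M \<and> v \<in> e)"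

end

(*
  As sigma is +-1-valued, sigma(E(K_4n)) = (4n choose 2) - 2|N|, where N is the set of negative
  edges, so the hypothesis forces 2|N| > (n - 2)(7n + 1). An Erdos-Gallai type bound (a graph on
  m vertices whose maximum matching has t <= (m - 1)/3 edges has at most t(2m - t - 1)/2 edges)
  then yields a matching of n - 1 negative edges, and any perfect matching M extending it has
  sigma(M) <= 2n - 2(n - 1) = 2. The same applied to -sigma gives a perfect matching with
  sigma >= -2. Finally, one perfect matching can be turned into another by exchanges
  {a,c},{b,d} -> {a,b},{c,d}, each changing sigma by at most 4, so on the way some perfect
  matching has |sigma| <= 2.
*)

theory Submission
  imports Defs
begin

lemma pairwise_disjnt_Un:
  assumes "pairwise disjnt A" "pairwise disjnt B" "\<And>x y. x \<in> A \<Longrightarrow> y \<in> B \<Longrightarrow> disjnt x y"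
  shows "pairwise disjnt (A \<union> B)"
  using assms unfolding pairwise_def by (metis Un_iff disjnt_sym)

lemma card_doubleton_le: "card {x, y} \<le> 2"
  by (cases "x = y") simp_all

lemma card_ge_2_otherE:
  assumes "finite S" "2 \<le> card S"
  obtains u where "u \<in> S" "u \<noteq> w"
proof -
  have "\<not> S \<subseteq> {w}"
  proof
    assume "S \<subseteq> {w}"
    hence "card S \<le> 1" using card_mono[of "{w}" S] by simp
    thus False using assms(2) by linarith
  qed
  thus ?thesis using that by blast
qed

lemma sum_Diff_Un:
  fixes f :: "'a \<Rightarrow> 'b :: ab_group_add"
  assumes "finite A" "X \<subseteq> A" "finite Y" "Y \<inter> (A - X) = {}"
  shows "sum f (A - X \<union> Y) = sum f A - sum f X + sum f Y"
proof -
  have "sum f (A - X \<union> Y) = sum f (A - X) + sum f Y"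
    using assms by (intro sum.union_disjoint) auto
  also have "sum f (A - X) = sum f A - sum f X"
    using assms by (simp add: sum_diff finite_subset)
  finally show ?thesis .
qed

lemma abs_sum_le_card:
  fixes f :: "'a \<Rightarrow> 'b :: linordered_idom"
  assumes "\<And>x. x \<in> A \<Longrightarrow> \<bar>f x\<bar> \<le> 1"
  shows "\<bar>sum f A\<bar> \<le> of_nat (card A)"
proof -
  have "\<bar>sum f A\<bar> \<le> (\<Sum>x\<in>A. \<bar>f x\<bar>)" by (rule sum_abs)
  also have "\<dots> \<le> of_nat (card A)" using sum_bounded_above[of A "\<lambda>x. \<bar>f x\<bar>" 1] assms by simp
  finally show ?thesis .
qed

lemma sum_Diff_Un_le:
  fixes f :: "'a \<Rightarrow> int"
  assumes "finite A" "X \<subseteq> A" "finite Y" "Y \<inter> (A - X) = {}" "\<And>x. x \<in> X \<union> Y \<Longrightarrow> \<bar>f x\<bar> \<le> 1"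
  shows "sum f (A - X \<union> Y) \<le> sum f A + int (card X) + int (card Y)"
proof -
  have "\<bar>sum f X\<bar> \<le> int (card X)" "\<bar>sum f Y\<bar> \<le> int (card Y)"
    using assms(5) by (intro abs_sum_le_card; blast)+
  thus ?thesis using sum_Diff_Un[OF assms(1-4), of f] by linarith
qed

lemma sum_sign_eq:
  assumes "finite A" "\<forall>e\<in>A. \<sigma> e \<in> {-1, 1 :: int}"
  shows "(\<Sum>e\<in>A. \<sigma> e) = int (card A) - 2 * int (card {e\<in>A. \<sigma> e = -1})"
  using assms
proof (induction A rule: finite_induct)
  case (insert x F)
  have "{e\<in>insert x F. \<sigma> e = -1} =
      (if \<sigma> x = -1 then insert x {e\<in>F. \<sigma> e = -1} else {e\<in>F. \<sigma> e = -1})" by auto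
  with insert show ?case by auto
qed simp

lemma two_mult_choose_two: "2 * (k choose 2) = k * (k - 1)"
proof -
  have "even (k * (k - 1))" by (cases k) simp_all
  thus ?thesis unfolding choose_two by simp
qed

lemma edges_K_iff: "e \<in> edges_K m \<longleftrightarrow> e \<subseteq> {0..<m} \<and> card e = 2"
  unfolding edges_K_def card_2_iff by fastforce

lemma finite_edges_K: "finite (edges_K m)"
  by (rule finite_subset[of _ "Pow {0..<m}"]) (auto simp: edges_K_iff subset_iff)

lemma card_edges_K: "card (edges_K m) = m choose 2"
proof -
  have "edges_K m = {e. e \<subseteq> {0..<m} \<and> card e = 2}"
    using edges_K_iff by blast
  thus ?thesis using n_subsets[of "{0..<m}" 2] by simp
qed

lemma finite_edge: "e \<in> edges_K m \<Longrightarrow> finite e"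
  by (auto simp: edges_K_def)

lemma edges_K_containsE:
  assumes "e \<in> edges_K m" "a \<in> e"
  obtains c where "e = {a, c}" "a \<noteq> c" "c < m"
  using assms unfolding edges_K_def by auto

lemma card_Union_edges:
  assumes "M \<subseteq> edges_K m" "pairwise disjnt M"
  shows "card (\<Union>M) = 2 * card M"
proof -
  have "card (\<Union>M) = sum card M"
    using assms by (intro card_Union_disjoint) (auto intro: finite_edge)
  also have "\<dots> = sum (\<lambda>_. 2) M"
    using assms(1) by (intro sum.cong) (auto simp: edges_K_iff)
  finally show ?thesis by simp
qed

lemma perfect_matching_iff:
  "perfect_matching m M \<longleftrightarrow> M \<subseteq> edges_K m \<and> pairwise disjnt M \<and> \<Union>M = {0..<m}"
proof
  assume pm: "perfect_matching m M"
  hence sub: "M \<subseteq> edges_K m" and cover: "\<forall>v<m. \<exists>!e. e \<in> M \<and> v \<in> e"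
    unfolding perfect_matching_def by auto
  have inside: "\<Union>M \<subseteq> {0..<m}" using sub by (auto simp: edges_K_iff subset_iff)
  have "pairwise disjnt M"
    unfolding pairwise_def disjnt_def
  proof (intro ballI impI)
    fix e f assume ef: "e \<in> M" "f \<in> M" "e \<noteq> f"
    show "e \<inter> f = {}"
    proof (rule ccontr)
      assume "e \<inter> f \<noteq> {}"
      then obtain v where v: "v \<in> e" "v \<in> f" by blast
      hence "v < m" using ef inside by auto
      thus False using cover ef v by blast
    qed
  qed
  with sub inside cover show "M \<subseteq> edges_K m \<and> pairwise disjnt M \<and> \<Union>M = {0..<m}" by auto
next
  assume "M \<subseteq> edges_K m \<and> pairwise disjnt M \<and> \<Union>M = {0..<m}"
  thus "perfect_matching m M"
    unfolding perfect_matching_def pairwise_def disjnt_def by auto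
qed

lemma perfect_matching_card: "perfect_matching m M \<Longrightarrow> 2 * card M = m"
  using card_Union_edges[of M m] by (simp add: perfect_matching_iff)

lemma finite_perfect_matching: "perfect_matching m M \<Longrightarrow> finite M"
  using finite_edges_K finite_subset by (auto simp: perfect_matching_iff)

lemma exists_pairing:
  assumes "finite S" "even (card S)"
  shows "\<exists>P. pairwise disjnt P \<and> \<Union>P = S \<and> (\<forall>e\<in>P. card e = 2)"
  using assms
proof (induction "card S" arbitrary: S rule: less_induct)
  case less
  show ?case
  proof (cases "S = {}")
    case True
    thus ?thesis by (intro exI[of _ "{}"]) auto
  next
    case False
    hence "card S \<noteq> 0" "card S \<noteq> 1" using less.prems by auto
    hence "card S \<ge> 2" by linarith
    then obtain x y where xy: "x \<in> S" "y \<in> S" "x \<noteq> y"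
      using card_le_Suc0_iff_eq[OF less.prems(1)] by (metis not_less_eq_eq numeral_2_eq_2)
    define S' where "S' = S - {x, y}"
    have "card S' = card S - 2" using xy less.prems(1) unfolding S'_def by (simp add: card_Diff_subset)
    moreover have "finite S'" using less.prems(1) unfolding S'_def by simp
    ultimately obtain P where P: "pairwise disjnt P" "\<Union>P = S'" "\<forall>e\<in>P. card e = 2"
      using less.hyps[of S'] \<open>card S \<ge> 2\<close> less.prems(2) by auto
    have "disjnt {x, y} e" if "e \<in> P" for e
      using that P(2) unfolding S'_def disjnt_def by blast
    show ?thesis
    proof (intro exI[of _ "insert {x, y} P"] conjI)
      show "pairwise disjnt (insert {x, y} P)"
        using P(1) \<open>\<And>e. e \<in> P \<Longrightarrow> disjnt {x, y} e\<close> by (simp add: pairwise_insert disjnt_sym)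
      show "\<Union> (insert {x, y} P) = S" using P(2) xy unfolding S'_def by auto
      show "\<forall>e\<in>insert {x, y} P. card e = 2" using P(3) xy by auto
    qed
  qed
qed

lemma matching_extends_to_perfect_matching:
  assumes A: "A \<subseteq> edges_K m" "pairwise disjnt A" and "even m"
  obtains M where "perfect_matching m M" "A \<subseteq> M"
proof -
  define S where "S = {0..<m} - \<Union>A"
  have inside: "\<Union>A \<subseteq> {0..<m}" using A(1) by (auto simp: edges_K_iff subset_iff)
  have "card S = m - 2 * card A"
    unfolding S_def using card_Diff_subset[OF _ inside] card_Union_edges[OF A] inside
    by (simp add: finite_subset)
  moreover have "2 * card A \<le> m"
    using card_mono[OF _ inside] card_Union_edges[OF A] by simp
  ultimately have "even (card S)" using \<open>even m\<close> by auto
  then obtain P where P: "pairwise disjnt P" "\<Union>P = S" "\<forall>e\<in>P. card e = 2"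
    using exists_pairing[of S] unfolding S_def by auto
  have "P \<subseteq> edges_K m"
  proof
    fix e assume "e \<in> P"
    hence "e \<subseteq> {0..<m}" using P(2) unfolding S_def by blast
    thus "e \<in> edges_K m" using P(3) \<open>e \<in> P\<close> by (simp add: edges_K_iff)
  qed
  moreover have "pairwise disjnt (A \<union> P)"
    using A(2) P(1,2) unfolding S_def by (intro pairwise_disjnt_Un) (auto simp: disjnt_def)
  moreover have "\<Union>(A \<union> P) = {0..<m}" using P(2) inside unfolding S_def by auto
  ultimately have "perfect_matching m (A \<union> P)" using A(1) by (simp add: perfect_matching_iff)
  thus ?thesis using that by blast
qed

section \<open>Moving between perfect matchings\<close>

lemma perfect_matching_exchange:
  assumes pm: "perfect_matching m M" and ac: "{a, c} \<in> M" and bd: "{b, d} \<in> M"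
    and ne: "{a, c} \<noteq> {b, d}"
  shows "perfect_matching m (M - {{a, c}, {b, d}} \<union> {{a, b}, {c, d}})"
proof -
  have sub: "M \<subseteq> edges_K m" and disj: "pairwise disjnt M" and cover: "\<Union>M = {0..<m}"
    using pm by (auto simp: perfect_matching_iff)
  have "disjnt {a, c} {b, d}" using pairwiseD[OF disj ac bd ne] .
  moreover have "a \<noteq> c" "b \<noteq> d"
    using ac bd sub by (auto simp: edges_K_iff dest: card_2_iff[THEN iffD1])
  ultimately have distinct: "distinct [a, b, c, d]" by (auto simp: disjnt_def)
  have away: "disjnt f {a, b, c, d}" if "f \<in> M - {{a, c}, {b, d}}" for f
  proof -
    have f: "f \<in> M" "f \<noteq> {a, c}" "f \<noteq> {b, d}" using that by auto
    have "disjnt f {a, c}" "disjnt f {b, d}"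
      using pairwiseD[OF disj f(1) ac f(2)] pairwiseD[OF disj f(1) bd f(3)] .
    thus ?thesis by (auto simp: disjnt_def)
  qed
  have "{a, b, c, d} \<subseteq> {0..<m}" using ac bd cover by blast
  hence "{{a, b}, {c, d}} \<subseteq> edges_K m" using distinct by (auto simp: edges_K_iff)
  hence "M - {{a, c}, {b, d}} \<union> {{a, b}, {c, d}} \<subseteq> edges_K m" using sub by blast
  moreover have "pairwise disjnt (M - {{a, c}, {b, d}} \<union> {{a, b}, {c, d}})"
  proof (rule pairwise_disjnt_Un)
    show "pairwise disjnt (M - {{a, c}, {b, d}})" using disj by (rule pairwise_subset) blast
    show "pairwise disjnt {{a, b}, {c, d}}" using distinct by (auto simp: pairwise_insert)
    fix f g assume "f \<in> M - {{a, c}, {b, d}}" "g \<in> {{a, b}, {c, d}}"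
    thus "disjnt f g" using away disjnt_subset2[of f "{a, b, c, d}" g] by blast
  qed
  moreover have "\<Union>(M - {{a, c}, {b, d}} \<union> {{a, b}, {c, d}}) = \<Union>M"
    using ac bd by blast
  ultimately show ?thesis using cover by (simp add: perfect_matching_iff)
qed

lemma perfect_matchings_differE:
  assumes pm1: "perfect_matching m M1" and pm2: "perfect_matching m M2" and ne: "M1 \<noteq> M2"
  obtains a b c d where "{a, b} \<in> M2 - M1" "{a, c} \<in> M1 - M2" "{b, d} \<in> M1 - M2"
    "{a, c} \<noteq> {b, d}"
proof -
  have sub1: "M1 \<subseteq> edges_K m" and disj1: "pairwise disjnt M1" and cover1: "\<Union>M1 = {0..<m}"
    using pm1 by (auto simp: perfect_matching_iff)
  have sub2: "M2 \<subseteq> edges_K m" and disj2: "pairwise disjnt M2"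
    using pm2 by (auto simp: perfect_matching_iff)
  have "card M2 = card M1" using perfect_matching_card[OF pm1] perfect_matching_card[OF pm2] by simp
  hence "\<not> M2 \<subseteq> M1" using card_subset_eq[OF finite_perfect_matching[OF pm1]] ne by blast
  then obtain e where e: "e \<in> M2" "e \<notin> M1" by blast
  then obtain a b where ab: "e = {a, b}" "a < m" "b < m"
    using sub2 unfolding edges_K_def by blast
  obtain ea eb where ea: "ea \<in> M1" "a \<in> ea" and eb: "eb \<in> M1" "b \<in> eb"
    using cover1 ab by (metis UnionE atLeastLessThan_iff zero_le)
  obtain c d where c: "ea = {a, c}" and d: "eb = {b, d}"
    using ea eb sub1 by (metis edges_K_containsE subsetD)
  have "ea \<noteq> e" "eb \<noteq> e" using e ea eb by auto
  hence "ea \<notin> M2" "eb \<notin> M2"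
    using pairwiseD[OF disj2 _ e(1)] ea(2) eb(2) ab(1) by (auto simp: disjnt_def)
  have "ea \<noteq> eb"
  proof
    assume "ea = eb"
    hence "e \<subseteq> ea" using ab ea eb by auto
    moreover have "card e = card ea"
      using subsetD[OF sub2 e(1)] subsetD[OF sub1 ea(1)] by (simp add: edges_K_iff)
    ultimately have "e = ea" using card_subset_eq finite_edge subsetD[OF sub1 ea(1)] by blast
    thus False using e ea by simp
  qed
  thus ?thesis using that e ea eb \<open>ea \<notin> M2\<close> \<open>eb \<notin> M2\<close> ab(1) c d by blast
qed

lemma perfect_matching_step_towards:
  assumes pm1: "perfect_matching m M1" and pm2: "perfect_matching m M2" and ne: "M1 \<noteq> M2"
    and sig: "\<forall>e\<in>edges_K m. \<sigma> e \<in> {-1, 1 :: int}"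
  obtains M where "perfect_matching m M" "card (M2 - M) < card (M2 - M1)"
    "(\<Sum>e\<in>M. \<sigma> e) \<le> (\<Sum>e\<in>M1. \<sigma> e) + 4"
proof -
  obtain a b c d where ab: "{a, b} \<in> M2 - M1" and ac: "{a, c} \<in> M1 - M2"
    and bd: "{b, d} \<in> M1 - M2" and ne': "{a, c} \<noteq> {b, d}"
    by (rule perfect_matchings_differE[OF pm1 pm2 ne])
  have fin: "finite M1" "finite M2" using pm1 pm2 by (auto intro: finite_perfect_matching)
  define X where "X = {{a, c}, {b, d}}"
  define Y where "Y = {{a, b}, {c, d}}"
  define M where "M = M1 - X \<union> Y"
  have XY: "X \<subseteq> M1" "X \<inter> M2 = {}" "{a, b} \<in> Y" using ab ac bd unfolding X_def Y_def by auto
  have pm: "perfect_matching m M"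
    unfolding M_def X_def Y_def using ac bd by (intro perfect_matching_exchange[OF pm1 _ _ ne']) auto
  moreover have "M2 - M \<subset> M2 - M1" using XY ab unfolding M_def by blast
  hence "card (M2 - M) < card (M2 - M1)" using fin by (intro psubset_card_mono) auto
  moreover have "(\<Sum>e\<in>M. \<sigma> e) \<le> (\<Sum>e\<in>M1. \<sigma> e) + 4"
  proof -
    have "{c, d} \<notin> M1 - X"
    proof
      assume cd: "{c, d} \<in> M1 - X"
      moreover have "pairwise disjnt M1" using pm1 by (simp add: perfect_matching_iff)
      moreover have "{c, d} \<noteq> {a, c}" "{a, c} \<in> M1" using cd ac unfolding X_def by auto
      ultimately have "disjnt {c, d} {a, c}" using pairwiseD[of disjnt M1 "{c, d}" "{a, c}"] by blast
      thus False by (simp add: disjnt_def)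
    qed
    hence "Y \<inter> (M1 - X) = {}" using ab unfolding Y_def by auto
    moreover have "X \<union> Y \<subseteq> edges_K m"
      using XY(1) pm pm1 unfolding M_def by (auto simp: perfect_matching_iff)
    hence "\<bar>\<sigma> e\<bar> \<le> 1" if "e \<in> X \<union> Y" for e using that sig by fastforce
    ultimately have "(\<Sum>e\<in>M. \<sigma> e) \<le> (\<Sum>e\<in>M1. \<sigma> e) + int (card X) + int (card Y)"
      unfolding M_def using fin(1) XY(1) by (intro sum_Diff_Un_le) (auto simp: Y_def)
    thus ?thesis using card_doubleton_le[of "{a, c}" "{b, d}"] card_doubleton_le[of "{a, b}" "{c, d}"]
      unfolding X_def Y_def by linarith
  qed
  ultimately show ?thesis using that by blast
qed

lemma perfect_matching_sum_between:
  assumes sig: "\<forall>e\<in>edges_K m. \<sigma> e \<in> {-1, 1 :: int}"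
    and pm1: "perfect_matching m M1" and le: "(\<Sum>e\<in>M1. \<sigma> e) \<le> 2"
    and pm2: "perfect_matching m M2" and ge: "(\<Sum>e\<in>M2. \<sigma> e) \<ge> -2"
  shows "\<exists>M. perfect_matching m M \<and> \<bar>\<Sum>e\<in>M. \<sigma> e\<bar> \<le> 2"
  using pm1 le
proof (induction "card (M2 - M1)" arbitrary: M1 rule: less_induct)
  case less
  show ?case
  proof (cases "(\<Sum>e\<in>M1. \<sigma> e) \<ge> -2")
    case True
    with less.prems show ?thesis by (intro exI[of _ M1]) simp
  next
    case False
    with ge have "M1 \<noteq> M2" by auto
    then obtain M where M: "perfect_matching m M" "card (M2 - M) < card (M2 - M1)"
      and step: "(\<Sum>e\<in>M. \<sigma> e) \<le> (\<Sum>e\<in>M1. \<sigma> e) + 4"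
      by (rule perfect_matching_step_towards[OF less.prems(1) pm2 _ sig])
    have "(\<Sum>e\<in>M. \<sigma> e) \<le> 2" using False step by linarith
    with less.hyps[OF M(2) M(1)] show ?thesis .
  qed
qed

section \<open>An Erdos-Gallai type bound\<close>

lemma erdos_gallai_arith:
  fixes p t m :: nat
  assumes "p \<le> t" "3 * t + 1 \<le> m"
  shows "2 * (((2 * t) choose 2) - (p choose 2) + (p * (m - 2 * t) + 2 * (t - p))) \<le> t * (2 * m - t - 1)"
proof -
  have c1: "2 * ((2 * t) choose 2) = 2 * t * (2 * t - 1)" by (rule two_mult_choose_two)
  have c2: "2 * (p choose 2) = p * (p - 1)" by (rule two_mult_choose_two)
  have "p * (p - 1) \<le> 2 * t * (2 * t - 1)" using assms(1) by (intro mult_le_mono) auto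
  hence le: "p choose 2 \<le> (2 * t) choose 2" using c1 c2 by linarith
  define u where "u = m - 2 * t"
  have u: "int u = int m - 2 * int t" "int u \<ge> int t + 1" using assms unfolding u_def by auto
  have key: "0 \<le> (int t - int p) * (2 * int u - int t - int p - 3)"
  proof (cases "p = t")
    case False
    hence "p + 1 \<le> t" using assms by auto
    thus ?thesis using u by (intro mult_nonneg_nonneg) auto
  qed simp
  have L: "int (2 * (((2 * t) choose 2) - (p choose 2) + (p * (m - 2 * t) + 2 * (t - p))))
     = int (2 * t * (2 * t - 1)) - int (p * (p - 1)) + 2 * int p * int u + 4 * (int t - int p)"
    using c1 c2 le assms(1) unfolding u_def[symmetric] by (simp add: of_nat_diff algebra_simps)
  have R: "int (t * (2 * m - t - 1)) = int t * (2 * int m - int t - 1)"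
    using assms by (simp add: of_nat_diff)
  have "int (2 * t * (2 * t - 1)) = 2 * int t * (2 * int t - 1)" by (cases t) (auto simp: algebra_simps)
  moreover have "int (p * (p - 1)) = int p * (int p - 1)" by (cases p) (auto simp: algebra_simps)
  ultimately show ?thesis using L R key u by (simp add: algebra_simps)
qed

lemma matching_switch:
  assumes M: "finite M" "pairwise disjnt M" and S: "S \<subseteq> M"
    and N: "finite N" "{} \<notin> N" "pairwise disjnt N" "\<forall>f\<in>N. disjnt f (\<Union>(M - S))"
  shows "pairwise disjnt (M - S \<union> N)" "card (M - S \<union> N) = card M - card S + card N"
proof -
  have away: "disjnt f g" if "f \<in> M - S" "g \<in> N" for f g
  proof -
    have "f \<subseteq> \<Union>(M - S)" using that(1) by blast
    thus ?thesis using N(4) that(2) disjnt_subset2 disjnt_sym by metis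
  qed
  show "pairwise disjnt (M - S \<union> N)"
    using pairwise_subset[OF M(2)] N(3) away by (intro pairwise_disjnt_Un) auto
  have "(M - S) \<inter> N = {}"
  proof (intro equals0I)
    fix f assume "f \<in> (M - S) \<inter> N"
    hence "disjnt f f" using away by blast
    thus False using N(2) \<open>f \<in> (M - S) \<inter> N\<close> by auto
  qed
  hence "card (M - S \<union> N) = card (M - S) + card N" using M(1) N(1) by (simp add: card_Un_disjoint)
  also have "card (M - S) = card M - card S" using S M(1) by (simp add: card_Diff_subset finite_subset)
  finally show "card (M - S \<union> N) = card M - card S + card N" .
qed

locale maximum_matching =
  fixes m :: nat and E M :: "nat set set"
  assumes graph: "E \<subseteq> edges_K m"
    and subgraph: "M \<subseteq> E" and matching: "pairwise disjnt M"
    and maximum: "\<And>M'. M' \<subseteq> E \<Longrightarrow> pairwise disjnt M' \<Longrightarrow> card M' \<le> card M"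
begin

lemma finite_matching: "finite M"
  using subgraph graph finite_edges_K by (blast intro: finite_subset)

lemma finite_matched_edge: "e \<in> M \<Longrightarrow> finite e"
  using subgraph graph finite_edge by blast

lemma finite_matched_vertices: "finite (\<Union>M)"
  using finite_matching finite_matched_edge by blast

lemma card_matched_vertices: "card (\<Union>M) = 2 * card M"
  using card_Union_edges subgraph graph matching by blast

lemma matched_edge_neq: "{a, b} \<in> M \<Longrightarrow> a \<noteq> b"
  using subgraph graph by (auto simp: edges_K_iff)

lemma no_augmentation:
  assumes "S \<subseteq> M" "N \<subseteq> E" "pairwise disjnt N" "\<forall>f\<in>N. disjnt f (\<Union>(M - S))"
  shows "card N \<le> card S"
proof -
  have "finite N" using assms(2) graph finite_edges_K by (blast intro: finite_subset)
  moreover have "{} \<notin> N" using assms(2) graph by (auto simp: edges_K_iff)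
  ultimately have new: "pairwise disjnt (M - S \<union> N)" "card (M - S \<union> N) = card M - card S + card N"
    using matching_switch[OF finite_matching matching assms(1)] assms(3,4) by auto
  have "M - S \<union> N \<subseteq> E" using subgraph assms(2) by blast
  hence "card (M - S \<union> N) \<le> card M" using maximum new(1) by blast
  moreover have "card S \<le> card M" using card_mono[OF finite_matching assms(1)] .
  ultimately show ?thesis using new(2) by linarith
qed

lemma vertex_of_removed_edge:
  assumes "e \<in> S" "S \<subseteq> M" "x \<in> e"
  shows "x \<notin> \<Union>(M - S)"
proof
  assume "x \<in> \<Union>(M - S)"
  then obtain f where "f \<in> M" "f \<notin> S" "x \<in> f" by blast
  hence "disjnt e f" using pairwiseD[OF matching] assms by (metis subsetD)
  thus False using assms(3) \<open>x \<in> f\<close> by (auto simp: disjnt_def)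
qed

definition unmatched :: "nat set" where
  "unmatched = {0..<m} - \<Union>M"

definition unmatched_nbrs :: "nat \<Rightarrow> nat set" where
  "unmatched_nbrs v = {u \<in> unmatched. {v, u} \<in> E}"

lemma unmatched_not_matched: "u \<in> unmatched \<Longrightarrow> u \<notin> \<Union>M"
  unfolding unmatched_def by blast

lemma finite_unmatched: "finite unmatched"
  unfolding unmatched_def by simp

lemma card_unmatched: "card unmatched = m - 2 * card M"
proof -
  have "\<Union>M \<subseteq> {0..<m}" using subgraph graph by (auto simp: edges_K_iff subset_iff)
  thus ?thesis using card_matched_vertices unfolding unmatched_def by (simp add: card_Diff_subset finite_subset)
qed

lemma finite_unmatched_nbrs: "finite (unmatched_nbrs v)"
  using finite_unmatched unfolding unmatched_nbrs_def by simp

lemma card_unmatched_nbrs_le: "card (unmatched_nbrs v) \<le> card unmatched"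
  using finite_unmatched unfolding unmatched_nbrs_def by (intro card_mono) auto

text \<open>The next three lemmas exclude augmenting paths of length 1, 3 and 5.\<close>

lemma unmatched_independent:
  assumes "u \<in> unmatched" "w \<in> unmatched"
  shows "{u, w} \<notin> E"
proof
  assume "{u, w} \<in> E"
  moreover have "disjnt {u, w} (\<Union>(M - {}))" using assms unmatched_not_matched by (simp add: disjnt_def)
  ultimately have "card {{u, w}} \<le> card ({} :: nat set set)"
    by (intro no_augmentation) auto
  thus False by simp
qed

lemma unmatched_nbrs_of_matched_edge:
  assumes ab: "{a, b} \<in> M" and u: "u \<in> unmatched_nbrs a" and w: "w \<in> unmatched_nbrs b"
  shows "u = w"
proof (rule ccontr)
  assume "u \<noteq> w"
  have uw: "u \<in> unmatched" "w \<in> unmatched" and edges: "{a, u} \<in> E" "{b, w} \<in> E"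
    using u w unfolding unmatched_nbrs_def by auto
  have "a \<in> \<Union>M" "b \<in> \<Union>M" using ab by auto
  hence fresh: "u \<noteq> a" "u \<noteq> b" "w \<noteq> a" "w \<noteq> b" using uw unmatched_not_matched by auto
  moreover have "a \<noteq> b" using matched_edge_neq[OF ab] .
  moreover have "a \<notin> \<Union>(M - {{a, b}})" "b \<notin> \<Union>(M - {{a, b}})"
    using vertex_of_removed_edge[of "{a, b}" "{{a, b}}"] ab by auto
  ultimately have "card {{a, u}, {b, w}} \<le> card {{a, b}}"
    using ab uw unmatched_not_matched edges \<open>u \<noteq> w\<close>
    by (intro no_augmentation) (auto simp: pairwise_insert disjnt_def)
  moreover have "{a, u} \<noteq> {b, w}" using \<open>a \<noteq> b\<close> fresh by (auto simp: doubleton_eq_iff)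
  ultimately show False by simp
qed

lemma unmatched_nbrs_of_two_matched_edges:
  assumes e1: "{a1, b1} \<in> M" and e2: "{a2, b2} \<in> M" and ne: "{a1, b1} \<noteq> {a2, b2}"
    and u: "u \<in> unmatched_nbrs a1" and w: "w \<in> unmatched_nbrs a2" and "u \<noteq> w"
  shows "{b1, b2} \<notin> E"
proof
  assume "{b1, b2} \<in> E"
  have uw: "u \<in> unmatched" "w \<in> unmatched" and edges: "{a1, u} \<in> E" "{a2, w} \<in> E"
    using u w unfolding unmatched_nbrs_def by auto
  have matched: "a1 \<in> \<Union>M" "b1 \<in> \<Union>M" "a2 \<in> \<Union>M" "b2 \<in> \<Union>M" using e1 e2 by auto
  hence fresh: "u \<notin> {a1, b1, a2, b2}" "w \<notin> {a1, b1, a2, b2}" using uw unmatched_not_matched by auto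
  moreover have apart: "disjnt {a1, b1} {a2, b2}" using pairwiseD[OF matching e1 e2 ne] .
  moreover have neq: "a1 \<noteq> b1" "a2 \<noteq> b2" using matched_edge_neq e1 e2 by auto
  moreover have "x \<notin> \<Union>(M - {{a1, b1}, {a2, b2}})" if "x \<in> {a1, b1, a2, b2}" for x
    using that vertex_of_removed_edge[of _ "{{a1, b1}, {a2, b2}}"] e1 e2 by blast
  ultimately have "card {{a1, u}, {b1, b2}, {a2, w}} \<le> card {{a1, b1}, {a2, b2}}"
    using e1 e2 uw unmatched_not_matched edges \<open>{b1, b2} \<in> E\<close> \<open>u \<noteq> w\<close>
    by (intro no_augmentation) (auto simp: pairwise_insert disjnt_def)
  moreover have "card {{a1, u}, {b1, b2}, {a2, w}} = 3"
    using fresh apart neq \<open>u \<noteq> w\<close> by (auto simp: disjnt_def doubleton_eq_iff)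
  ultimately show False using ne by simp
qed

text \<open>A matched vertex with two unmatched neighbours forces its partner to have none, and
  these partners are pairwise non-adjacent; counting the edges at matched vertices on this basis
  gives the bound.\<close>

definition heavy :: "nat set" where
  "heavy = {v \<in> \<Union>M. 2 \<le> card (unmatched_nbrs v)}"

definition heavy_edges :: "nat set set" where
  "heavy_edges = {e \<in> M. e \<inter> heavy \<noteq> {}}"

definition partners :: "nat set" where
  "partners = (\<Union>e\<in>heavy_edges. e - heavy)"

lemma heavy_edges_subset: "heavy_edges \<subseteq> M"
  unfolding heavy_edges_def by blast

lemma partners_subset: "partners \<subseteq> \<Union>M"
  unfolding partners_def using heavy_edges_subset by blast

lemma partner_of_heavy:
  assumes "{a, b} \<in> M" "a \<in> heavy"
  shows "unmatched_nbrs b = {}"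
proof (rule equals0I)
  fix w assume w: "w \<in> unmatched_nbrs b"
  have "2 \<le> card (unmatched_nbrs a)" using assms(2) unfolding heavy_def by simp
  then obtain u where "u \<in> unmatched_nbrs a" "u \<noteq> w" by (rule card_ge_2_otherE[OF finite_unmatched_nbrs])
  thus False using unmatched_nbrs_of_matched_edge[OF assms(1) _ w] by blast
qed

lemma heavy_edgeE:
  assumes "e \<in> heavy_edges"
  obtains a x where "e = {a, x}" "a \<in> heavy" "x \<notin> heavy" "unmatched_nbrs x = {}"
proof -
  have "e \<in> M" using assms unfolding heavy_edges_def by simp
  then obtain a x where e: "e = {a, x}" using subgraph graph by (auto simp: edges_K_def)
  have not_heavy: "v \<notin> heavy" if "unmatched_nbrs v = {}" for v
    using that unfolding heavy_def by simp
  have "a \<in> heavy \<or> x \<in> heavy" using assms e unfolding heavy_edges_def by auto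
  thus ?thesis
  proof
    assume "a \<in> heavy"
    moreover have "unmatched_nbrs x = {}" using partner_of_heavy \<open>e \<in> M\<close> e \<open>a \<in> heavy\<close> by simp
    ultimately show ?thesis using that e not_heavy by blast
  next
    assume "x \<in> heavy"
    moreover have "unmatched_nbrs a = {}"
      using partner_of_heavy[of x a] \<open>e \<in> M\<close> e \<open>x \<in> heavy\<close> by (simp add: insert_commute)
    ultimately show ?thesis using that e not_heavy by (metis insert_commute)
  qed
qed

lemma heavy_edge_Diff_heavy:
  assumes "e \<in> heavy_edges"
  obtains a x where "e = {a, x}" "a \<in> heavy" "e - heavy = {x}"
proof -
  obtain a x where "e = {a, x}" "a \<in> heavy" "x \<notin> heavy" using assms by (rule heavy_edgeE)
  thus ?thesis using that by blast
qed

lemma card_partners: "card partners = card heavy_edges"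
proof -
  have fin: "finite heavy_edges" using finite_matching unfolding heavy_edges_def by simp
  have one: "card (e - heavy) = 1" if e: "e \<in> heavy_edges" for e
  proof -
    obtain a x where "e = {a, x}" "a \<in> heavy" "e - heavy = {x}"
      by (rule heavy_edge_Diff_heavy[OF e])
    thus ?thesis by simp
  qed
  have "card partners = (\<Sum>e\<in>heavy_edges. card (e - heavy))"
    unfolding partners_def
  proof (rule card_UN_disjoint[OF fin])
    show "\<forall>e\<in>heavy_edges. finite (e - heavy)"
      using one by (metis card.infinite zero_neq_one)
    show "\<forall>e\<in>heavy_edges. \<forall>f\<in>heavy_edges. e \<noteq> f \<longrightarrow> (e - heavy) \<inter> (f - heavy) = {}"
    proof (intro ballI impI)
      fix e f assume "e \<in> heavy_edges" "f \<in> heavy_edges" "e \<noteq> f"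
      hence "disjnt e f" using pairwiseD[OF matching] unfolding heavy_edges_def by blast
      thus "(e - heavy) \<inter> (f - heavy) = {}" by (auto simp: disjnt_def)
    qed
  qed
  also have "\<dots> = card heavy_edges" using one by simp
  finally show ?thesis .
qed

lemma partners_independent:
  assumes "x \<in> partners" "y \<in> partners" "x \<noteq> y"
  shows "{x, y} \<notin> E"
proof -
  obtain e1 where e1: "e1 \<in> heavy_edges" "x \<in> e1 - heavy" using assms(1) unfolding partners_def by blast
  obtain e2 where e2: "e2 \<in> heavy_edges" "y \<in> e2 - heavy" using assms(2) unfolding partners_def by blast
  obtain a1 x' where a1: "e1 = {a1, x'}" "a1 \<in> heavy" "e1 - heavy = {x'}"
    using e1(1) by (rule heavy_edge_Diff_heavy)
  obtain a2 y' where a2: "e2 = {a2, y'}" "a2 \<in> heavy" "e2 - heavy = {y'}"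
    using e2(1) by (rule heavy_edge_Diff_heavy)
  have "x' = x" "y' = y" using a1(3) a2(3) e1(2) e2(2) by auto
  have "e1 \<noteq> e2" using a1(3) a2(3) \<open>x' = x\<close> \<open>y' = y\<close> assms(3) by auto
  have "e1 \<in> M" "e2 \<in> M" using e1(1) e2(1) unfolding heavy_edges_def by auto
  have "2 \<le> card (unmatched_nbrs a1)" "2 \<le> card (unmatched_nbrs a2)" using a1(2) a2(2) unfolding heavy_def by auto
  obtain u where u: "u \<in> unmatched_nbrs a1"
    using card_ge_2_otherE[OF finite_unmatched_nbrs \<open>2 \<le> card (unmatched_nbrs a1)\<close>] by blast
  obtain w where w: "w \<in> unmatched_nbrs a2" "u \<noteq> w"
    using card_ge_2_otherE[OF finite_unmatched_nbrs \<open>2 \<le> card (unmatched_nbrs a2)\<close>, where w = u] by blast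
  have "{a1, x} \<in> M" "{a2, y} \<in> M" "{a1, x} \<noteq> {a2, y}"
    using \<open>e1 \<in> M\<close> \<open>e2 \<in> M\<close> \<open>e1 \<noteq> e2\<close> a1(1) a2(1) \<open>x' = x\<close> \<open>y' = y\<close> by auto
  from unmatched_nbrs_of_two_matched_edges[OF this u w(1,2)] show ?thesis .
qed

lemma sum_unmatched_nbrs_edge_le:
  assumes "e \<in> M"
  shows "(\<Sum>v\<in>e. card (unmatched_nbrs v)) \<le> (if e \<in> heavy_edges then card unmatched else 2)"
proof (cases "e \<in> heavy_edges")
  case True
  then obtain a x where e: "e = {a, x}" "a \<in> heavy" "x \<notin> heavy" "unmatched_nbrs x = {}"
    by (rule heavy_edgeE)
  hence "a \<noteq> x" by blast
  hence "(\<Sum>v\<in>e. card (unmatched_nbrs v)) = card (unmatched_nbrs a)" using e by simp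
  with True show ?thesis using card_unmatched_nbrs_le by simp
next
  case False
  obtain a b where e: "e = {a, b}" using assms subgraph graph by (auto simp: edges_K_def)
  hence "a \<notin> heavy" "b \<notin> heavy" using False assms unfolding heavy_edges_def by auto
  moreover have "a \<in> \<Union>M" "b \<in> \<Union>M" using assms e by auto
  ultimately have "card (unmatched_nbrs a) \<le> 1" "card (unmatched_nbrs b) \<le> 1" unfolding heavy_def by auto
  hence "(\<Sum>v\<in>e. card (unmatched_nbrs v)) \<le> 2" using e by (cases "a = b") auto
  with False show ?thesis by simp
qed

lemma sum_unmatched_nbrs_le:
  "(\<Sum>v\<in>\<Union>M. card (unmatched_nbrs v)) \<le> card heavy_edges * card unmatched + 2 * (card M - card heavy_edges)"
proof -
  have "(\<Sum>v\<in>\<Union>M. card (unmatched_nbrs v)) = (\<Sum>e\<in>M. \<Sum>v\<in>e. card (unmatched_nbrs v))"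
    using matching finite_matching finite_matched_edge
    by (intro sum.Union_disjoint[simplified comp_def]) (auto simp: pairwise_def disjnt_def)
  also have "\<dots> \<le> (\<Sum>e\<in>M. if e \<in> heavy_edges then card unmatched else 2)"
    using sum_unmatched_nbrs_edge_le by (rule sum_mono)
  also have "\<dots> = card heavy_edges * card unmatched + 2 * (card M - card heavy_edges)"
    using finite_matching heavy_edges_subset
    by (simp add: sum.If_cases Int_absorb1 Diff_eq[symmetric] card_Diff_subset finite_subset)
  finally show ?thesis .
qed

definition matched_pairs :: "nat set set" where
  "matched_pairs = {e. e \<subseteq> \<Union>M \<and> card e = 2} - {e. e \<subseteq> partners \<and> card e = 2}"

definition crossing_edges :: "nat set set" where
  "crossing_edges = (\<Union>v\<in>\<Union>M. (\<lambda>u. {v, u}) ` unmatched_nbrs v)"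

lemma E_subset_matched_pairs_Un_crossing_edges: "E \<subseteq> matched_pairs \<union> crossing_edges"
proof
  fix f assume "f \<in> E"
  then obtain x y where f: "f = {x, y}" "x \<noteq> y" "x < m" "y < m"
    using graph by (auto simp: edges_K_def)
  have matched_or_unmatched: "v \<in> \<Union>M \<or> v \<in> unmatched" if "v < m" for v
    using that unfolding unmatched_def by auto
  consider "x \<in> \<Union>M" "y \<in> \<Union>M" | "x \<in> \<Union>M" "y \<in> unmatched" | "x \<in> unmatched" "y \<in> \<Union>M"
    | "x \<in> unmatched" "y \<in> unmatched"
    using matched_or_unmatched f(3,4) by blast
  thus "f \<in> matched_pairs \<union> crossing_edges"
  proof cases
    case 1
    have "\<not> f \<subseteq> partners" using partners_independent f \<open>f \<in> E\<close> by auto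
    thus ?thesis using 1 f unfolding matched_pairs_def by auto
  next
    case 2
    hence "y \<in> unmatched_nbrs x" using \<open>f \<in> E\<close> f unfolding unmatched_nbrs_def by simp
    thus ?thesis using 2 f unfolding crossing_edges_def by blast
  next
    case 3
    hence "x \<in> unmatched_nbrs y" using \<open>f \<in> E\<close> f unfolding unmatched_nbrs_def by (simp add: insert_commute)
    moreover have "f = {y, x}" using f by auto
    ultimately show ?thesis using 3 unfolding crossing_edges_def by blast
  next
    case 4
    thus ?thesis using unmatched_independent \<open>f \<in> E\<close> f by simp
  qed
qed

lemma finite_matched_pairs: "finite matched_pairs"
  unfolding matched_pairs_def using finite_subset[of _ "Pow (\<Union>M)"] finite_matched_vertices by auto

lemma card_matched_pairs: "card matched_pairs = ((2 * card M) choose 2) - (card heavy_edges choose 2)"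
proof -
  have "card matched_pairs = (card (\<Union>M) choose 2) - (card partners choose 2)"
    unfolding matched_pairs_def
    using finite_matched_vertices partners_subset finite_subset[OF partners_subset finite_matched_vertices]
    by (subst card_Diff_subset) (auto simp: n_subsets)
  thus ?thesis using card_matched_vertices card_partners by simp
qed

lemma finite_crossing_edges: "finite crossing_edges"
  unfolding crossing_edges_def using finite_matched_vertices finite_unmatched_nbrs by blast

lemma card_crossing_edges_le:
  "card crossing_edges \<le> card heavy_edges * card unmatched + 2 * (card M - card heavy_edges)"
proof -
  have "card crossing_edges \<le> (\<Sum>v\<in>\<Union>M. card ((\<lambda>u. {v, u}) ` unmatched_nbrs v))"
    unfolding crossing_edges_def using finite_matched_vertices by (rule card_UN_le)
  also have "\<dots> \<le> (\<Sum>v\<in>\<Union>M. card (unmatched_nbrs v))"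
    by (intro sum_mono card_image_le finite_unmatched_nbrs)
  finally show ?thesis using sum_unmatched_nbrs_le by linarith
qed

lemma card_E_le:
  "card E \<le> (((2 * card M) choose 2) - (card heavy_edges choose 2))
     + (card heavy_edges * card unmatched + 2 * (card M - card heavy_edges))"
proof -
  have "card E \<le> card (matched_pairs \<union> crossing_edges)"
    using finite_matched_pairs finite_crossing_edges E_subset_matched_pairs_Un_crossing_edges
    by (intro card_mono) auto
  also have "\<dots> \<le> card matched_pairs + card crossing_edges" by (rule card_Un_le)
  finally show ?thesis using card_matched_pairs card_crossing_edges_le by linarith
qed

theorem erdos_gallai_bound:
  assumes "3 * card M + 1 \<le> m"
  shows "2 * card E \<le> card M * (2 * m - card M - 1)"
proof -
  have "card heavy_edges \<le> card M" using finite_matching heavy_edges_subset by (rule card_mono)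
  hence "2 * card E \<le> 2 * (((2 * card M) choose 2) - (card heavy_edges choose 2)
     + (card heavy_edges * (m - 2 * card M) + 2 * (card M - card heavy_edges)))"
    using card_E_le card_unmatched by simp
  also have "\<dots> \<le> card M * (2 * m - card M - 1)"
    using erdos_gallai_arith[OF \<open>card heavy_edges \<le> card M\<close> assms] .
  finally show ?thesis .
qed

end

lemma maximum_matching_exists:
  assumes "E \<subseteq> edges_K m"
  obtains M where "maximum_matching m E M"
proof -
  define sizes where "sizes = card ` {M. M \<subseteq> E \<and> pairwise disjnt M}"
  have "finite E" using assms finite_edges_K by (rule finite_subset)
  hence "finite sizes" unfolding sizes_def by simp
  moreover have "0 \<in> sizes" unfolding sizes_def by (rule image_eqI[of _ _ "{}"]) auto
  ultimately have "Max sizes \<in> sizes" by (intro Max_in) auto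
  then obtain M where "M \<subseteq> E" "pairwise disjnt M" "card M = Max sizes"
    unfolding sizes_def by auto
  moreover have "card M' \<le> Max sizes" if "M' \<subseteq> E" "pairwise disjnt M'" for M'
    using \<open>finite sizes\<close> that unfolding sizes_def by auto
  ultimately have "maximum_matching m E M"
    using assms by unfold_locales auto
  thus ?thesis using that by blast
qed

lemma maximum_negative_matching_large:
  fixes n :: nat and \<sigma> :: "nat set \<Rightarrow> int"
  assumes "n \<ge> 1" and sig: "\<forall>e\<in>edges_K (4 * n). \<sigma> e \<in> {-1, 1}"
    and total: "(\<Sum>e\<in>edges_K (4 * n). \<sigma> e) < int (n^2 + 11 * n + 2)"
    and max: "maximum_matching (4 * n) {e \<in> edges_K (4 * n). \<sigma> e = -1} M"
  shows "n - 1 \<le> card M"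
proof (rule ccontr)
  define neg where "neg = {e \<in> edges_K (4 * n). \<sigma> e = -1}"
  define t where "t = card M"
  define B where "B = (int n - 2) * (7 * int n + 1)"
  define K where "K = 4 * int n * (4 * int n - 1)"
  assume "\<not> n - 1 \<le> card M"
  hence small: "t + 2 \<le> n" unfolding t_def by simp
  have "2 * card neg \<le> t * (2 * (4 * n) - t - 1)"
    using maximum_matching.erdos_gallai_bound[OF max] small unfolding neg_def t_def by simp
  moreover have "int (t * (2 * (4 * n) - t - 1)) = int t * (8 * int n - int t - 1)"
    using small by (simp add: of_nat_diff)
  moreover have "int t * (8 * int n - int t - 1) \<le> B"
  proof -
    have "0 \<le> (int n - 2 - int t) * (7 * int n + 1 - int t)" using small by (intro mult_nonneg_nonneg) auto
    thus ?thesis unfolding B_def by (simp add: algebra_simps)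
  qed
  ultimately have neg_le: "2 * int (card neg) \<le> B" by linarith
  have "(\<Sum>e\<in>edges_K (4 * n). \<sigma> e) = int (card (edges_K (4 * n))) - 2 * int (card neg)"
    unfolding neg_def using sum_sign_eq[OF finite_edges_K sig] .
  moreover have "2 * int (card (edges_K (4 * n))) = K"
  proof -
    have "2 * card (edges_K (4 * n)) = 4 * n * (4 * n - 1)"
      unfolding card_edges_K by (rule two_mult_choose_two)
    thus ?thesis unfolding K_def using \<open>n \<ge> 1\<close> by (simp add: of_nat_diff)
  qed
  moreover have "K - 2 * B = 2 * int (n^2 + 11 * n + 2)"
    unfolding K_def B_def by (simp add: algebra_simps power2_eq_square)
  ultimately show False using neg_le total by (smt (verit))
qed

lemma perfect_matching_sum_le_two:
  fixes n :: nat and \<sigma> :: "nat set \<Rightarrow> int"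
  assumes "n \<ge> 1" and sig: "\<forall>e\<in>edges_K (4 * n). \<sigma> e \<in> {-1, 1}"
    and total: "(\<Sum>e\<in>edges_K (4 * n). \<sigma> e) < int (n^2 + 11 * n + 2)"
  obtains M where "perfect_matching (4 * n) M" "(\<Sum>e\<in>M. \<sigma> e) \<le> 2"
proof -
  let ?neg = "{e \<in> edges_K (4 * n). \<sigma> e = -1}"
  obtain M0 where max: "maximum_matching (4 * n) ?neg M0"
    using maximum_matching_exists[of ?neg] by blast
  have large: "n - 1 \<le> card M0" using maximum_negative_matching_large[OF assms max] .
  have M0: "M0 \<subseteq> ?neg" "pairwise disjnt M0"
    using max unfolding maximum_matching_def by auto
  have "M0 \<subseteq> edges_K (4 * n)" using M0(1) by blast
  then obtain M where M: "perfect_matching (4 * n) M" "M0 \<subseteq> M"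
    using M0(2) by (rule matching_extends_to_perfect_matching) simp
  have sub: "M \<subseteq> edges_K (4 * n)" and fin: "finite M"
    using M(1) finite_perfect_matching by (auto simp: perfect_matching_iff)
  have "M0 \<subseteq> {e \<in> M. \<sigma> e = -1}" using M0(1) M(2) by auto
  hence "card M0 \<le> card {e \<in> M. \<sigma> e = -1}" using fin by (intro card_mono) auto
  moreover have "(\<Sum>e\<in>M. \<sigma> e) = int (card M) - 2 * int (card {e \<in> M. \<sigma> e = -1})"
    using sum_sign_eq[OF fin] sig sub by blast
  moreover have "2 * card M = 4 * n" using perfect_matching_card[OF M(1)] .
  ultimately have "(\<Sum>e\<in>M. \<sigma> e) \<le> 2" using large \<open>n \<ge> 1\<close> by linarith
  thus ?thesis using M(1) that by blast
qed

theorem corollary4: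
  fixes n :: nat and \<sigma> :: "nat set \<Rightarrow> int"
  assumes "n \<ge> 1"
    and "\<forall>e\<in>edges_K (4 * n). \<sigma> e \<in> {-1, 1}"
    and "\<bar>\<Sum>e\<in>edges_K (4 * n). \<sigma> e\<bar> < int (n^2 + 11 * n + 2)"
  shows "\<exists>M. perfect_matching (4 * n) M \<and> \<bar>\<Sum>e\<in>M. \<sigma> e\<bar> \<le> 2"
proof -
  have "(\<Sum>e\<in>edges_K (4 * n). \<sigma> e) < int (n^2 + 11 * n + 2)" using assms(3) by linarith
  then obtain M1 where M1: "perfect_matching (4 * n) M1" "(\<Sum>e\<in>M1. \<sigma> e) \<le> 2"
    by (rule perfect_matching_sum_le_two[OF assms(1,2)])
  have "\<forall>e\<in>edges_K (4 * n). - \<sigma> e \<in> {-1, 1}" using assms(2) by auto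
  moreover have "(\<Sum>e\<in>edges_K (4 * n). - \<sigma> e) < int (n^2 + 11 * n + 2)"
    using assms(3) by (simp add: sum_negf)
  ultimately obtain M2 where M2: "perfect_matching (4 * n) M2" "(\<Sum>e\<in>M2. - \<sigma> e) \<le> 2"
    by (rule perfect_matching_sum_le_two[OF assms(1)])
  have "(\<Sum>e\<in>M2. \<sigma> e) \<ge> -2" using M2(2) by (simp add: sum_negf)
  with assms(2) M1 M2(1) show ?thesis by (rule perfect_matching_sum_between)
qed

end
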